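(* Let $\langle A,C,d,O,v,(\prec_a)_{a\in A}\rangle$ be an infinite sequential game, let $a\in A$, and assume: (1) $\prec_a$ is a strict weak order; (2) for every play $p\in C^\omega$ and increasing $\varphi:\mathbb{N}\to\mathbb{N}$, if $d(p_{<\varphi(n)})=a$ and $G_a(p_{<\varphi(n+1)})\subsetneq G_a(p_{<\varphi(n)})$ for all $n\in\mathbb{N}$, then $v(p)\in\bigcap_{n\in\mathbb{N}}G_a(p_{<\varphi(n)})$; (3) for every $\gamma\in C^*$ there exists a strategy $s$ of $a$ with $g_a(\gamma,s)=G_a(\gamma)$. Then there exists a strategy $s$ of $a$ such that $g_a(\gamma,s)=G_a(\gamma)$ for all $\gamma\in C^*$.
   Context: An infinite sequential game $\langle A,C,d,O,v,(\prec_a)_{a\in A}\rangle$ consists of a non-empty set of agents $A$, a non-empty set of choices $C$, $d:C^*\to A$ (the agent choosing after each finite history), a non-empty set of outcomes $O$, $v:C^\omega\to O$, and binary relations $\prec_a$ on $O$. A strategy of $a$ is a function $s:d^{-1}(\{a\})\to C$. For a partial function $t:\subseteq C^*\to C$, $P(t)$ is the set of plays $p(\sigma)$ (where $p_n=\sigma(p_{<n})$) over all total $\sigma:C^*\to C$ extending $t$. For $\gamma\in C^*$ and strategy $s$ of $a$, $s|_\gamma$ is the restriction of $s$ to histories in $d^{-1}(\{a\})$ extending $\gamma$; $g_a(\gamma,s):=\{o\in O\mid\exists p\in P(s|_\gamma)\cap\gamma C^\omega,\ \neg(o\prec_a v(p))\}$ and $G_a(\gamma):=\bigcap_s g_a(\gamma,s)$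 over all strategies $s$ of $a$. $p_{<n}$ is the length-$n$ prefix of $p$. A strict weak order is an irreflexive, transitive relation $\prec$ such that $\neg(x\prec y)\wedge\neg(y\prec z)$ implies $\neg(x\prec z)$. *)

theory Defs
  imports Main "HOL-Library.Sublist"
begin

text \<open>Agents, choices, outcomes are types (hence non-empty). Finite histories C^* are
lists (in chronological order), plays C^omega are functions nat => 'c.
A strategy of agent a is represented as a total function 'c list => 'c; only its values
on histories h with d h = a are ever used.\<close>

definition strict_weak_order :: "('o \<Rightarrow> 'o \<Rightarrow> bool) \<Rightarrow> bool" where
  "strict_weak_order r \<longleftrightarrow> (\<forall>x. \<not> r x x) \<and> (\<forall>x y z. r x y \<and> r y z \<longrightarrow> r x z)
     \<and> (\<forall>x y z. \<not> r x y \<and> \<not> r y z \<longrightarrow> \<not> r x z)"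

definition pre :: "(nat \<Rightarrow> 'c) \<Rightarrow> nat \<Rightarrow> 'c list" where
  "pre p n = map p [0..<n]"

fun hist :: "('c list \<Rightarrow> 'c) \<Rightarrow> nat \<Rightarrow> 'c list" where
  "hist \<sigma> 0 = []"
| "hist \<sigma> (Suc n) = hist \<sigma> n @ [\<sigma> (hist \<sigma> n)]"

definition play :: "('c list \<Rightarrow> 'c) \<Rightarrow> nat \<Rightarrow> 'c" where
  "play \<sigma> n = \<sigma> (hist \<sigma> n)"

definition plays :: "('c list \<Rightarrow> 'c option) \<Rightarrow> (nat \<Rightarrow> 'c) set" where
  "plays t = {play \<sigma> | \<sigma>. \<forall>h c. t h = Some c \<longrightarrow> \<sigma> h = c}"

definition restr :: "('c list \<Rightarrow> 'a) \<Rightarrow> 'a \<Rightarrow> ('c list \<Rightarrow> 'c) \<Rightarrow> 'c list \<Rightarrow> 'c list \<Rightarrow> 'c option" where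
  "restr d a s \<gamma> h = (if d h = a \<and> prefix \<gamma> h then Some (s h) else None)"

definition g_set :: "('c list \<Rightarrow> 'a) \<Rightarrow> ((nat \<Rightarrow> 'c) \<Rightarrow> 'o) \<Rightarrow> ('a \<Rightarrow> 'o \<Rightarrow> 'o \<Rightarrow> bool)
    \<Rightarrow> 'a \<Rightarrow> 'c list \<Rightarrow> ('c list \<Rightarrow> 'c) \<Rightarrow> 'o set" where
  "g_set d v prec a \<gamma> s = {x. \<exists>p \<in> plays (restr d a s \<gamma>). pre p (length \<gamma>) = \<gamma> \<and> \<not> prec a x (v p)}"

definition G_set :: "('c list \<Rightarrow> 'a) \<Rightarrow> ((nat \<Rightarrow> 'c) \<Rightarrow> 'o) \<Rightarrow> ('a \<Rightarrow> 'o \<Rightarrow> 'o \<Rightarrow> bool)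
    \<Rightarrow> 'a \<Rightarrow> 'c list \<Rightarrow> 'o set" where
  "G_set d v prec a \<gamma> = (\<Inter>s. g_set d v prec a \<gamma> s)"

end

theory Submission
  imports Defs
begin

text \<open>Fix, for every history \<gamma>, a strategy S \<gamma> of a that is optimal at \<gamma>. The glued strategy
plays, at a history h, the strategy S k of the anchor k of h: the last history on the way to h
from which the play so far has followed S k without any change of G. Along a play p that follows
the glued strategy, G is then antitone. If G eventually stabilises, so does the anchor, and p
follows S k from the anchor k on, whence every outcome x not below v p lies in G k. Otherwise
either a eventually stops choosing, and every such x lies in G trivially, or G decreases strictly
along a subsequence of histories of a, and the limit hypothesis puts v p, hence every such x,
into G.\<close>

lemma pre_Suc: "pre p (Suc n) = pre p n @ [p n]"
  by (simp add: pre_def)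

lemma pre_0 [simp]: "pre p 0 = []"
  by (simp add: pre_def)

lemma length_pre [simp]: "length (pre p n) = n"
  by (simp add: pre_def)

lemma take_pre: "take m (pre p n) = pre p (min m n)"
  by (simp add: pre_def take_map min_def)

lemma nth_pre: "i < n \<Longrightarrow> pre p n ! i = p i"
  by (simp add: pre_def)

lemma prefix_pre_iff: "prefix k (pre p n) \<longleftrightarrow> length k \<le> n \<and> pre p (length k) = k"
proof
  assume "prefix k (pre p n)"
  then show "length k \<le> n \<and> pre p (length k) = k"
    by (metis length_pre prefix_length_le take_pre min.absorb1 append_eq_conv_conj prefix_def)
next
  assume "length k \<le> n \<and> pre p (length k) = k"
  then show "prefix k (pre p n)"
    by (metis take_pre min.absorb1 take_is_prefix)
qed

lemma hist_eq_pre_play: "hist \<sigma> n = pre (play \<sigma>) n"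
  by (induction n) (auto simp: pre_Suc play_def)

definition follows :: "('c list \<Rightarrow> 'a) \<Rightarrow> 'a \<Rightarrow> ('c list \<Rightarrow> 'c) \<Rightarrow> 'c list \<Rightarrow> (nat \<Rightarrow> 'c) \<Rightarrow> bool" where
  "follows d a t k p \<longleftrightarrow> (\<forall>n. d (pre p n) = a \<and> prefix k (pre p n) \<longrightarrow> p n = t (pre p n))"

definition hist_follows :: "('c list \<Rightarrow> 'a) \<Rightarrow> 'a \<Rightarrow> ('c list \<Rightarrow> 'c) \<Rightarrow> 'c list \<Rightarrow> 'c list \<Rightarrow> bool" where
  "hist_follows d a t k h \<longleftrightarrow>
     (\<forall>m. length k \<le> m \<and> m < length h \<and> d (take m h) = a \<longrightarrow> h ! m = t (take m h))"

lemma plays_restr_iff: "p \<in> plays (restr d a t k) \<longleftrightarrow> follows d a t k p"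
proof
  assume "p \<in> plays (restr d a t k)"
  then obtain \<sigma> where "p = play \<sigma>" and "\<forall>h c. restr d a t k h = Some c \<longrightarrow> \<sigma> h = c"
    by (auto simp: plays_def)
  then show "follows d a t k p"
    by (auto simp: follows_def restr_def play_def hist_eq_pre_play)
next
  assume follows: "follows d a t k p"
  define \<sigma> where "\<sigma> h = (if h = pre p (length h) then p (length h) else t h)" for h
  have "hist \<sigma> n = pre p n" for n
    by (induction n) (auto simp: pre_Suc \<sigma>_def)
  then have "play \<sigma> = p"
    by (auto simp: play_def \<sigma>_def)
  moreover have "\<sigma> h = c" if "restr d a t k h = Some c" for h c
    using that follows unfolding restr_def \<sigma>_def follows_def
    by (metis option.distinct(1) option.inject)
  ultimately show "p \<in> plays (restr d a t k)"
    unfolding plays_def by blast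
qed

lemma g_set_iff: "x \<in> g_set d v prec a \<gamma> t \<longleftrightarrow>
    (\<exists>p. follows d a t \<gamma> p \<and> pre p (length \<gamma>) = \<gamma> \<and> \<not> prec a x (v p))"
  by (auto simp: g_set_def plays_restr_iff)

lemma G_set_subset_g_set: "G_set d v prec a \<gamma> \<subseteq> g_set d v prec a \<gamma> t"
  by (auto simp: G_set_def)

lemma hist_follows_Nil [simp]: "hist_follows d a t k []"
  by (simp add: hist_follows_def)

lemma hist_follows_snoc:
  assumes "hist_follows d a t k h" "d h = a \<Longrightarrow> c = t h"
  shows "hist_follows d a t k (h @ [c])"
  unfolding hist_follows_def
proof (intro allI impI)
  fix m assume m: "length k \<le> m \<and> m < length (h @ [c]) \<and> d (take m (h @ [c])) = a"
  show "(h @ [c]) ! m = t (take m (h @ [c]))"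
  proof (cases "m < length h")
    case True
    then show ?thesis
      using assms(1) m by (simp add: hist_follows_def nth_append)
  next
    case False
    then have "m = length h"
      using m by simp
    then show ?thesis
      using assms(2) m by simp
  qed
qed

lemma follows_trans:
  assumes "prefix k h" "hist_follows d a t k h" "pre p (length h) = h" "follows d a t h p"
  shows "follows d a t k p"
  unfolding follows_def
proof (intro allI impI)
  fix n assume n: "d (pre p n) = a \<and> prefix k (pre p n)"
  show "p n = t (pre p n)"
  proof (cases "length h \<le> n")
    case True
    then have "prefix h (pre p n)"
      using assms(3) prefix_pre_iff by metis
    then show ?thesis
      using assms(4) n by (auto simp: follows_def)
  next
    case False
    then have "take n h = pre p n" "h ! n = p n"
      using assms(3) take_pre[of n p "length h"] nth_pre[of n "length h" p] by auto
    moreover have "length k \<le> n"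
      using n prefix_pre_iff by metis
    ultimately show ?thesis
      using assms(2) False n unfolding hist_follows_def by (metis not_le)
  qed
qed

lemma g_set_antimono:
  assumes "prefix k h" "hist_follows d a t k h"
  shows "g_set d v prec a h t \<subseteq> g_set d v prec a k t"
proof
  fix x assume "x \<in> g_set d v prec a h t"
  then obtain p where p: "follows d a t h p" "pre p (length h) = h" "\<not> prec a x (v p)"
    by (auto simp: g_set_iff)
  then have "pre p (length k) = k"
    using assms(1) prefix_pre_iff by metis
  with p assms show "x \<in> g_set d v prec a k t"
    unfolding g_set_iff by (blast intro: follows_trans)
qed

lemma G_set_upclosed:
  assumes "strict_weak_order (prec a)" "y \<in> G_set d v prec a h" "\<not> prec a x y"
  shows "x \<in> G_set d v prec a h"
  unfolding G_set_def
proof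
  fix t
  from assms(2) obtain p where "follows d a t h p" "pre p (length h) = h" "\<not> prec a y (v p)"
    by (auto simp: G_set_def g_set_iff)
  moreover from this(3) have "\<not> prec a x (v p)"
    using assms(1,3) unfolding strict_weak_order_def by blast
  ultimately show "x \<in> g_set d v prec a h t"
    by (auto simp: g_set_iff)
qed

lemma G_set_if_eventually_passive:
  assumes "\<forall>n\<ge>N. d (pre p n) \<noteq> a" "\<not> prec a x (v p)"
  shows "x \<in> G_set d v prec a (pre p N)"
proof -
  have "follows d a t (pre p N) p" for t
    using assms(1) by (auto simp: follows_def prefix_pre_iff)
  then show ?thesis
    using assms(2) by (auto simp: G_set_def g_set_iff)
qed

lemma strictly_decreasing_subseq:
  fixes X :: "nat \<Rightarrow> 'b set"
  assumes antimono: "\<And>m m'. n0 \<le> m \<Longrightarrow> m \<le> m' \<Longrightarrow> X m' \<subseteq> X m"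
    and not_stable: "\<And>M. n0 \<le> M \<Longrightarrow> \<exists>m\<ge>M. X m \<noteq> X M"
    and frequent: "\<And>N. \<exists>n\<ge>N. P n"
  obtains \<phi> where "strict_mono \<phi>" "n0 \<le> \<phi> 0" "\<And>i. P (\<phi> i) \<and> X (\<phi> (Suc i)) \<subset> X (\<phi> i)"
proof -
  have "\<exists>n>M. P n \<and> X n \<subset> X M" if M: "n0 \<le> M" for M
  proof -
    obtain m where m: "M \<le> m" "X m \<noteq> X M"
      using not_stable[OF M] by blast
    obtain n where n: "m \<le> n" "P n"
      using frequent by blast
    have "X n \<subset> X M"
      using antimono[OF M m(1)] antimono[of m n] m n M by auto
    moreover from this have "M < n"
      using n(1) m(1) by (metis dual_order.order_iff_strict less_le_trans less_irrefl)
    ultimately show ?thesis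
      using n(2) by blast
  qed
  then obtain f where f: "\<And>M. n0 \<le> M \<Longrightarrow> M < f M \<and> P (f M) \<and> X (f M) \<subset> X M"
    by metis
  obtain n1 where n1: "n0 \<le> n1" "P n1"
    using frequent by blast
  define \<phi> where "\<phi> i = (f ^^ i) n1" for i
  have \<phi>_Suc: "\<phi> (Suc i) = f (\<phi> i)" for i
    by (simp add: \<phi>_def)
  have \<phi>_ge: "n0 \<le> \<phi> i" for i
  proof (induction i)
    case (Suc i)
    then show ?case
      using f[of "\<phi> i"] \<phi>_Suc by auto
  qed (use n1 in \<open>simp add: \<phi>_def\<close>)
  have "P (\<phi> i)" for i
    by (cases i) (use n1 f \<phi>_ge \<phi>_Suc in \<open>auto simp: \<phi>_def\<close>)
  moreover have "strict_mono \<phi>"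
    unfolding strict_mono_Suc_iff using f \<phi>_ge \<phi>_Suc by auto
  ultimately show ?thesis
    using that \<phi>_ge f \<phi>_Suc by auto
qed

locale optimal_choice =
  fixes d :: "'c list \<Rightarrow> 'a" and v :: "(nat \<Rightarrow> 'c) \<Rightarrow> 'o"
    and prec :: "'a \<Rightarrow> 'o \<Rightarrow> 'o \<Rightarrow> bool" and a :: 'a
    and S :: "'c list \<Rightarrow> 'c list \<Rightarrow> 'c"
  assumes S_optimal: "\<And>\<gamma>. g_set d v prec a \<gamma> (S \<gamma>) = G_set d v prec a \<gamma>"
begin

abbreviation G :: "'c list \<Rightarrow> 'o set" where
  "G \<equiv> G_set d v prec a"

fun anchor_rev :: "'c list \<Rightarrow> 'c list" where
  "anchor_rev [] = []"
| "anchor_rev (c # r) = (let k = anchor_rev r; h = rev (c # r) in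
     if hist_follows d a (S k) k h \<and> G h = G k then k else h)"

definition anchor :: "'c list \<Rightarrow> 'c list" where
  "anchor h = anchor_rev (rev h)"

definition glued :: "'c list \<Rightarrow> 'c" where
  "glued h = S (anchor h) h"

lemma anchor_Nil [simp]: "anchor [] = []"
  by (simp add: anchor_def)

lemma anchor_snoc: "anchor (h @ [c]) = (let k = anchor h in
    if hist_follows d a (S k) k (h @ [c]) \<and> G (h @ [c]) = G k then k else h @ [c])"
  by (simp add: anchor_def Let_def)

lemma anchor_properties:
  "prefix (anchor h) h \<and> hist_follows d a (S (anchor h)) (anchor h) h \<and> G (anchor h) = G h"
proof (induction h rule: rev_induct)
  case (snoc c h)
  then show ?case
    unfolding anchor_snoc Let_def by (auto simp: hist_follows_def)
qed simp

lemma anchor_snoc_keep: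
  assumes "hist_follows d a (S (anchor h)) (anchor h) (h @ [c])" "G (h @ [c]) = G h"
  shows "anchor (h @ [c]) = anchor h"
proof -
  have "G (h @ [c]) = G (anchor h)"
    using assms(2) anchor_properties[of h] by simp
  with assms(1) show ?thesis
    unfolding anchor_snoc Let_def by (simp only: simp_thms if_True)
qed

lemma g_set_S_anchor: "g_set d v prec a (anchor h) (S (anchor h)) = G h"
  using S_optimal anchor_properties by simp

context
  fixes p :: "nat \<Rightarrow> 'c" and n0 :: nat
  assumes follows_glued: "follows d a glued (pre p n0) p"
begin

lemma glued_move: "n0 \<le> m \<Longrightarrow> d (pre p m) = a \<Longrightarrow> p m = S (anchor (pre p m)) (pre p m)"
  using follows_glued by (auto simp: follows_def prefix_pre_iff glued_def)

lemma hist_follows_anchor_Suc: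
  "n0 \<le> m \<Longrightarrow> hist_follows d a (S (anchor (pre p m))) (anchor (pre p m)) (pre p (Suc m))"
  unfolding pre_Suc using anchor_properties glued_move by (blast intro: hist_follows_snoc)

lemma G_pre_Suc_subset:
  assumes "n0 \<le> m"
  shows "G (pre p (Suc m)) \<subseteq> G (pre p m)"
proof -
  let ?k = "anchor (pre p m)"
  have "prefix ?k (pre p (Suc m))"
    using anchor_properties[of "pre p m"] unfolding pre_Suc by (metis prefix_order.trans prefixI)
  have "G (pre p (Suc m)) \<subseteq> g_set d v prec a (pre p (Suc m)) (S ?k)"
    by (rule G_set_subset_g_set)
  also have "\<dots> \<subseteq> g_set d v prec a ?k (S ?k)"
    by (rule g_set_antimono[OF \<open>prefix ?k _\<close> hist_follows_anchor_Suc[OF assms]])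
  also have "\<dots> = G (pre p m)"
    by (rule g_set_S_anchor)
  finally show ?thesis .
qed

lemma G_pre_antimono:
  assumes "n0 \<le> m" "m \<le> m'"
  shows "G (pre p m') \<subseteq> G (pre p m)"
  using assms(2)
proof (induction m' rule: dec_induct)
  case (step n)
  then show ?case
    using G_pre_Suc_subset[of n] assms(1) by auto
qed simp

context
  fixes M :: nat
  assumes M_ge: "n0 \<le> M" and G_stable: "\<And>m. M \<le> m \<Longrightarrow> G (pre p m) = G (pre p M)"
begin

lemma anchor_pre_stable: "M \<le> m \<Longrightarrow> anchor (pre p m) = anchor (pre p M)"
proof (induction m rule: dec_induct)
  case (step m)
  have "hist_follows d a (S (anchor (pre p m))) (anchor (pre p m)) (pre p m @ [p m])"
    using hist_follows_anchor_Suc[of m] M_ge step.hyps unfolding pre_Suc by simp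
  moreover have "G (pre p m @ [p m]) = G (pre p m)"
    using G_stable[of "Suc m"] G_stable[of m] step.hyps unfolding pre_Suc by simp
  ultimately have "anchor (pre p (Suc m)) = anchor (pre p m)"
    unfolding pre_Suc by (rule anchor_snoc_keep)
  with step.IH show ?case
    by simp
qed simp

lemma G_set_if_G_stable:
  assumes "\<not> prec a x (v p)"
  shows "x \<in> G (pre p M)"
proof -
  let ?k = "anchor (pre p M)"
  have from_M: "follows d a (S ?k) (pre p M) p"
    unfolding follows_def
  proof (intro allI impI)
    fix n assume "d (pre p n) = a \<and> prefix (pre p M) (pre p n)"
    then have "M \<le> n" "d (pre p n) = a"
      by (auto simp: prefix_pre_iff)
    then show "p n = S ?k (pre p n)"
      using glued_move[of n] M_ge anchor_pre_stable[of n] by simp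
  qed
  have "follows d a (S ?k) ?k p"
    using follows_trans[OF _ _ _ from_M] anchor_properties[of "pre p M"] by simp
  moreover have "pre p (length ?k) = ?k"
    using anchor_properties[of "pre p M"] prefix_pre_iff by metis
  ultimately have "x \<in> g_set d v prec a ?k (S ?k)"
    using assms by (auto simp: g_set_iff)
  then show ?thesis
    using g_set_S_anchor by simp
qed

end

end

lemma g_set_glued:
  assumes swo: "strict_weak_order (prec a)"
    and limit: "\<And>p \<phi>. strict_mono (\<phi> :: nat \<Rightarrow> nat) \<Longrightarrow>
          (\<forall>n. d (pre p (\<phi> n)) = a \<and> G (pre p (\<phi> (Suc n))) \<subset> G (pre p (\<phi> n))) \<Longrightarrow>
          v p \<in> (\<Inter>n. G (pre p (\<phi> n)))"
  shows "g_set d v prec a \<gamma> glued = G \<gamma>"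
proof
  show "G \<gamma> \<subseteq> g_set d v prec a \<gamma> glued"
    by (rule G_set_subset_g_set)
  show "g_set d v prec a \<gamma> glued \<subseteq> G \<gamma>"
  proof
    fix x assume "x \<in> g_set d v prec a \<gamma> glued"
    then obtain p where p: "follows d a glued \<gamma> p" "pre p (length \<gamma>) = \<gamma>"
      and x: "\<not> prec a x (v p)"
      by (auto simp: g_set_iff)
    define n0 where "n0 = length \<gamma>"
    have fp: "follows d a glued (pre p n0) p"
      using p n0_def by simp
    have "\<exists>M\<ge>n0. x \<in> G (pre p M)"
    proof (cases "\<exists>M\<ge>n0. \<forall>m\<ge>M. G (pre p m) = G (pre p M)")
      case True
      then obtain M where "n0 \<le> M" "\<And>m. M \<le> m \<Longrightarrow> G (pre p m) = G (pre p M)"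
        by blast
      then show ?thesis
        using G_set_if_G_stable[OF fp _ _ x] by blast
    next
      case unstable: False
      show ?thesis
      proof (cases "\<exists>N. \<forall>n\<ge>N. d (pre p n) \<noteq> a")
        case True
        then obtain N where "\<forall>n\<ge>max N n0. d (pre p n) \<noteq> a"
          by auto
        then have "x \<in> G (pre p (max N n0))"
          using x by (rule G_set_if_eventually_passive)
        then show ?thesis
          using max.cobounded2 by blast
      next
        case False
        then have frequent: "\<exists>n\<ge>N. d (pre p n) = a" for N
          by blast
        have not_stable: "\<exists>m\<ge>M. G (pre p m) \<noteq> G (pre p M)" if "n0 \<le> M" for M
          using unstable that by blast
        obtain \<phi> where \<phi>: "strict_mono \<phi>" "n0 \<le> \<phi> 0"
          "\<And>i. d (pre p (\<phi> i)) = a \<and> G (pre p (\<phi> (Suc i))) \<subset> G (pre p (\<phi> i))"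
          using strictly_decreasing_subseq[OF G_pre_antimono[OF fp] not_stable frequent] by blast
        have "v p \<in> (\<Inter>i. G (pre p (\<phi> i)))"
          using \<phi>(3) by (intro limit[OF \<phi>(1)]) blast
        then have "v p \<in> G (pre p (\<phi> 0))"
          by blast
        with swo have "x \<in> G (pre p (\<phi> 0))"
          using x by (rule G_set_upclosed)
        then show ?thesis
          using \<phi>(2) by blast
      qed
    qed
    then obtain M where "n0 \<le> M" "x \<in> G (pre p M)"
      by blast
    then have "x \<in> G (pre p n0)"
      using G_pre_antimono[OF fp order_refl, of M] by blast
    then show "x \<in> G \<gamma>"
      using p(2) n0_def by simp
  qed
qed

end

theorem lemma21:
  fixes d :: "'c list \<Rightarrow> 'a" and v :: "(nat \<Rightarrow> 'c) \<Rightarrow> 'o"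
    and prec :: "'a \<Rightarrow> 'o \<Rightarrow> 'o \<Rightarrow> bool" and a :: 'a
  assumes "strict_weak_order (prec a)"
    and "\<And>p \<phi>. strict_mono (\<phi> :: nat \<Rightarrow> nat) \<Longrightarrow>
          (\<forall>n. d (pre p (\<phi> n)) = a \<and>
               G_set d v prec a (pre p (\<phi> (Suc n))) \<subset> G_set d v prec a (pre p (\<phi> n))) \<Longrightarrow>
          v p \<in> (\<Inter>n. G_set d v prec a (pre p (\<phi> n)))"
    and "\<And>\<gamma>. \<exists>s. g_set d v prec a \<gamma> s = G_set d v prec a \<gamma>"
  shows "\<exists>s. \<forall>\<gamma>. g_set d v prec a \<gamma> s = G_set d v prec a \<gamma>"
proof -
  obtain S where "\<And>\<gamma>. g_set d v prec a \<gamma> (S \<gamma>) = G_set d v prec a \<gamma>"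
    using assms(3) by metis
  then interpret optimal_choice d v prec a S
    by unfold_locales
  show ?thesis
    using g_set_glued[OF assms(1,2)] by blast
qed

end
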